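(* Let $\bar a>0$ and $b>0$ be real constants and consider the system of ordinary differential equations on $\mathbb{R}^3$ \begin{align*} \dot q_1 &= q_1\,[\bar a - 2b q_1 - b q_2 - b q_3],\\ \dot q_2 &= q_2\,[\bar a - b q_1 - 2b q_2 - b q_3],\\ \dot q_3 &= q_3\,[\bar a - b q_1 - b q_2 - 2b q_3]. \end{align*} Let $E_8$ denote the equilibrium of this system all of whose coordinates are strictly positive (the Cournot equilibrium, $E_8=(q^*,q^*,q^* )$ with $q^*=\bar a/(4b)$). Then $E_8$ is a stable node.
   Context: This system models a Cournot triopoly of identical firms with linear inverse demand $p=a-bQ$, $Q=q_1+q_2+q_3$, identical linear cost $C(q_i)=c+dq_i$, $\bar a=a-d$, and gradient (bounded rationality) adjustment with unit speed; $q_i$ is the output of firm $i$. A stable node is a hyperbolic equilibrium whose linearization has only real, strictly negative eigenvalues. *)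

theory Defs
  imports "HOL-Analysis.Analysis"
begin

text \<open>Gradient-adjustment Cournot triopoly vector field on R^3 (abar = a - d, unit speed).\<close>
definition cournot_field :: "real \<Rightarrow> real \<Rightarrow> real^3 \<Rightarrow> real^3" where
  "cournot_field abar b q =
     (\<chi> i. if i = 1 then q$1 * (abar - 2*b*q$1 - b*q$2 - b*q$3)
           else if i = 2 then q$2 * (abar - b*q$1 - 2*b*q$2 - b*q$3)
           else q$3 * (abar - b*q$1 - b*q$2 - 2*b*q$3))"

definition complex_eigenvalue :: "real^'n^'n \<Rightarrow> complex \<Rightarrow> bool" where
  "complex_eigenvalue J \<mu> \<longleftrightarrow>
     (\<exists>v::complex^'n. v \<noteq> 0 \<and> (\<chi> i j. complex_of_real (J$i$j)) *v v = \<mu> *s v)"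

definition hyperbolic_equilibrium_with_jacobian ::
  "(real^'n \<Rightarrow> real^'n) \<Rightarrow> real^'n \<Rightarrow> real^'n^'n \<Rightarrow> bool" where
  "hyperbolic_equilibrium_with_jacobian F x J \<longleftrightarrow>
     F x = 0 \<and> (F has_derivative (\<lambda>h. J *v h)) (at x) \<and>
     (\<forall>\<mu>. complex_eigenvalue J \<mu> \<longrightarrow> Re \<mu> \<noteq> 0)"

definition stable_node :: "(real^'n \<Rightarrow> real^'n) \<Rightarrow> real^'n \<Rightarrow> bool" where
  "stable_node F x \<longleftrightarrow>
     (\<exists>J. hyperbolic_equilibrium_with_jacobian F x J \<and>
          (\<forall>\<mu>. complex_eigenvalue J \<mu> \<longrightarrow> Im \<mu> = 0 \<and> Re \<mu> < 0))"

end

theory Submission imports Defs begin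

text \<open>At an interior equilibrium every firm satisfies \<open>b q\<^sub>i = abar - b \<Sigma>q\<close>, so all outputs
  coincide, and the Jacobian there is \<open>-c (I + 1 1\<^sup>T)\<close> with \<open>c = abar/(n+1) > 0\<close>. A vector with
  zero coordinate sum is an eigenvector for \<open>-c\<close>; otherwise summing the eigenvalue equations
  forces the eigenvalue \<open>-(n+1) c\<close>. Nothing depends on there being three firms, so the argument
  is carried out for \<open>n\<close> firms.\<close>

definition oligopoly_field :: "real \<Rightarrow> real \<Rightarrow> real^'n \<Rightarrow> real^'n" where
  "oligopoly_field abar b q = (\<chi> i. q$i * (abar - b * q$i - b * sum (($) q) UNIV))"

lemma cournot_field_eq_oligopoly_field: "cournot_field abar b = oligopoly_field abar b"
  by (auto simp: fun_eq_iff vec_eq_iff forall_3 sum_3 cournot_field_def oligopoly_field_def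
      algebra_simps)

lemma oligopoly_field_interior_zero_iff:
  fixes q :: "real^'n"
  assumes "b > 0" and "\<forall>i. 0 < q$i"
  shows "oligopoly_field abar b q = 0 \<longleftrightarrow> q = (\<chi> i. abar / (b * (CARD('n) + 1)))"
proof -
  let ?S = "sum (($) q) UNIV"
  have "q$i \<noteq> 0" for i
    using assms(2) by (metis less_irrefl)
  then have "oligopoly_field abar b q = 0 \<longleftrightarrow> (\<forall>i. abar - b * q$i = b * ?S)"
    by (simp add: oligopoly_field_def vec_eq_iff)
  also have "\<dots> \<longleftrightarrow> q = (\<chi> i. abar / (b * (CARD('n) + 1)))"
  proof
    assume eq: "\<forall>i. abar - b * q$i = b * ?S"
    define k where "k = (abar - b * ?S) / b"
    have q: "q$i = k" for i
      using eq assms(1) by (simp add: k_def field_simps)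
    have "($) q = (\<lambda>i. k)"
      using q by (simp add: fun_eq_iff)
    then have "?S = CARD('n) * k"
      by simp
    moreover have "b * k = abar - b * ?S"
      using assms(1) by (simp add: k_def)
    ultimately have "b * (CARD('n) + 1) * k = abar"
      by (simp add: algebra_simps)
    then have "k = abar / (b * (CARD('n) + 1))"
      using assms(1) by (simp add: eq_divide_eq ac_simps)
    then show "q = (\<chi> i. abar / (b * (CARD('n) + 1)))"
      using q by (simp add: vec_eq_iff)
  next
    define e where "e = abar / (b * (CARD('n) + 1))"
    assume "q = (\<chi> i. abar / (b * (CARD('n) + 1)))"
    then have q: "q = (\<chi> i. e)"
      by (simp add: e_def)
    have "b * (CARD('n) + 1) * e = abar"
      using assms(1) by (simp add: e_def)
    then show "\<forall>i. abar - b * q$i = b * ?S"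
      by (simp add: q algebra_simps)
  qed
  finally show ?thesis .
qed

lemma oligopoly_field_has_derivative:
  fixes x :: "real^'n"
  shows "(oligopoly_field abar b has_derivative
           (\<lambda>h. \<chi> i. h$i * (abar - b * x$i - b * sum (($) x) UNIV)
                      - b * x$i * (h$i + sum (($) h) UNIV))) (at x)"
  unfolding oligopoly_field_def
proof (subst has_derivative_componentwise_within, intro ballI)
  fix e :: "real^'n" assume "e \<in> Basis"
  then obtain i where e: "e = axis i 1" by (auto simp: Basis_vec_def)
  have coord: "((\<lambda>x::real^'n. x$j) has_derivative (\<lambda>h. h$j)) F" for j F
    by (rule bounded_linear_imp_has_derivative[OF bounded_linear_vec_nth])
  have "((\<lambda>x. x$i * (abar - b * x$i - b * sum (($) x) UNIV)) has_derivative
          (\<lambda>h. h$i * (abar - b * x$i - b * sum (($) x) UNIV)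
               + x$i * (- (b * h$i) - b * sum (($) h) UNIV))) (at x)"
    by (rule derivative_eq_intros coord refl)+ (auto simp: sum_negf)
  then show "((\<lambda>x. (\<chi> i. x$i * (abar - b * x$i - b * sum (($) x) UNIV)) \<bullet> e) has_derivative
      (\<lambda>h. (\<chi> i. h$i * (abar - b * x$i - b * sum (($) x) UNIV)
                 - b * x$i * (h$i + sum (($) h) UNIV)) \<bullet> e)) (at x)"
    by (simp add: e inner_axis algebra_simps)
qed

lemma matrix_vector_mult_identity_plus_ones:
  fixes c :: "'a::comm_ring_1"
  shows "((\<chi> i j. if i = j then -2 * c else -c) *v v) $ i = - c * (v$i + sum (($) v) UNIV)"
proof -
  have "((\<chi> i j. if i = j then -2 * c else -c) *v v) $ i
      = (\<Sum>j\<in>UNIV. (if i = j then - c * v$j else 0) + (- c) * v$j)"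
    unfolding matrix_vector_mult_def by (auto intro!: sum.cong simp: algebra_simps)
  also have "\<dots> = - c * v$i + (- c) * sum (($) v) UNIV"
    by (simp only: sum.distrib sum.delta sum_distrib_left) simp
  finally show ?thesis by (simp add: algebra_simps)
qed

lemma complex_eigenvalue_identity_plus_ones:
  fixes c :: real and \<mu> :: complex
  assumes "complex_eigenvalue (\<chi> i j. if i = j then -2 * c else -c :: real^'n^'n) \<mu>"
  shows "\<mu> = - of_real c \<or> \<mu> = - of_real ((CARD('n) + 1) * c)"
proof -
  define C where "C = complex_of_real c"
  have "(\<chi> i j. complex_of_real ((\<chi> i j. if i = j then -2 * c else -c :: real^'n^'n)$i$j))
      = (\<chi> i j. if i = j then -2 * C else -C)"
    by (simp add: vec_eq_iff C_def)
  then obtain v :: "complex^'n"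
    where "v \<noteq> 0" and Mv: "(\<chi> i j. if i = j then -2 * C else -C) *v v = \<mu> *s v"
    using assms unfolding complex_eigenvalue_def by metis
  have eig: "- C * (v$i + sum (($) v) UNIV) = \<mu> * v$i" for i
    using arg_cong[OF Mv, of "\<lambda>w. w$i"] by (simp only: matrix_vector_mult_identity_plus_ones) simp
  show ?thesis
  proof (cases "sum (($) v) UNIV = 0")
    case True
    obtain i where "v$i \<noteq> 0" using \<open>v \<noteq> 0\<close> by (auto simp: vec_eq_iff)
    moreover have "(\<mu> + C) * v$i = 0"
      using eig[of i] True by (simp add: distrib_right neg_eq_iff_add_eq_0 add.commute)
    ultimately show ?thesis by (simp add: C_def eq_neg_iff_add_eq_0)
  next
    case False
    have "\<mu> * sum (($) v) UNIV = (\<Sum>i\<in>UNIV. - C * (v$i + sum (($) v) UNIV))"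
      by (simp add: sum_distrib_left flip: eig)
    also have "\<dots> = - C * (\<Sum>i\<in>UNIV. v$i + sum (($) v) UNIV)"
      by (simp only: sum_distrib_left)
    also have "\<dots> = - C * (CARD('n) + 1) * sum (($) v) UNIV"
      by (simp add: sum.distrib algebra_simps)
    finally have "\<mu> = - C * (CARD('n) + 1)"
      using False by (metis mult_cancel_right)
    then show ?thesis by (simp add: C_def mult.commute)
  qed
qed

lemma stable_node_oligopoly_field:
  fixes abar b :: real
  assumes "abar > 0" and "b > 0"
  shows "stable_node (oligopoly_field abar b) (\<chi> i. abar / (b * (CARD('n) + 1)) :: real^'n)"
proof -
  define c where "c = abar / (CARD('n) + 1)"
  define E :: "real^'n" where "E = (\<chi> i. abar / (b * (CARD('n) + 1)))"
  define J :: "real^'n^'n" where "J = (\<chi> i j. if i = j then -2 * c else -c)"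
  have "\<forall>i. 0 < E$i"
    using assms by (simp add: E_def)
  then have "oligopoly_field abar b E = 0"
    using oligopoly_field_interior_zero_iff[OF assms(2)] unfolding E_def by blast
  moreover have "(oligopoly_field abar b has_derivative (\<lambda>h. J *v h)) (at E)"
  proof -
    have bE: "b * E$i = c" for i
      using assms(2) by (simp add: E_def c_def)
    have "sum (($) E) UNIV = CARD('n) * E$i" for i
      by (simp add: E_def)
    then have "abar - b * E$i - b * sum (($) E) UNIV = abar - (CARD('n) + 1) * (b * E$i)" for i
      by (simp add: algebra_simps)
    then have zero: "abar - b * E$i - b * sum (($) E) UNIV = 0" for i
      by (simp add: bE c_def)
    have "(\<lambda>h. \<chi> i. h$i * (abar - b * E$i - b * sum (($) E) UNIV)
              - b * E$i * (h$i + sum (($) h) UNIV)) = (\<lambda>h. J *v h)"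
      using bE zero by (simp add: fun_eq_iff vec_eq_iff J_def matrix_vector_mult_identity_plus_ones)
    then show ?thesis
      using oligopoly_field_has_derivative[of abar b E] by simp
  qed
  moreover have "Im \<mu> = 0 \<and> Re \<mu> < 0" if "complex_eigenvalue J \<mu>" for \<mu>
    using complex_eigenvalue_identity_plus_ones[OF that[unfolded J_def]] assms
    by (auto simp: c_def)
  ultimately show ?thesis
    unfolding stable_node_def hyperbolic_equilibrium_with_jacobian_def E_def by fastforce
qed

theorem theorem1:
  fixes abar b :: real
  assumes "abar > 0" and "b > 0"
  shows "(\<exists>!E. cournot_field abar b E = 0 \<and> (\<forall>i. 0 < E$i)) \<and>
         (\<forall>E. cournot_field abar b E = 0 \<and> (\<forall>i. 0 < E$i) \<longrightarrow>
              E = (\<chi> i. abar / (4*b)) \<and> stable_node (cournot_field abar b) E)"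
proof -
  define E :: "real^3" where "E = (\<chi> i. abar / (4*b))"
  have E_eq: "E = (\<chi> i. abar / (b * (CARD(3) + 1)))"
    by (simp add: E_def mult.commute)
  have equilibrium_iff: "cournot_field abar b q = 0 \<and> (\<forall>i. 0 < q$i) \<longleftrightarrow> q = E" for q
    using oligopoly_field_interior_zero_iff[OF assms(2), of q] assms
    by (auto simp: E_eq cournot_field_eq_oligopoly_field)
  have "stable_node (cournot_field abar b) E"
    using stable_node_oligopoly_field[OF assms, where 'n=3]
    by (simp add: E_eq cournot_field_eq_oligopoly_field)
  then show ?thesis
    using equilibrium_iff by (auto simp: E_def)
qed

end
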